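(* Every connected (finite, simple) graph $G$ satisfies $\mathrm{rc}(G) \leq 2\,\mathrm{f}(G) + 2$.
   Context: For an edge-coloring of a graph $G$, a path is rainbow if no two of its edges have the same color; $G$ is rainbow-connected if every pair of vertices is joined by a rainbow path. The rainbow connection number $\mathrm{rc}(G)$ is the minimum number of colors in an edge-coloring making $G$ rainbow-connected. The forest number $\mathrm{f}(G)$ is the maximum number of vertices of an induced subgraph of $G$ that is a forest. *)

theory Defs
  imports Main
begin

definition simple_graph :: "'a set \<Rightarrow> 'a set set \<Rightarrow> bool" where
  "simple_graph V E \<longleftrightarrow> finite V \<and>
     (\<forall>e\<in>E. \<exists>u v. u \<in> V \<and> v \<in> V \<and> u \<noteq> v \<and> e = {u, v})"

fun walk_edges :: "'a list \<Rightarrow> 'a set list" where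
  "walk_edges (x # y # xs) = {x, y} # walk_edges (y # xs)"
| "walk_edges _ = []"

definition is_path :: "'a set \<Rightarrow> 'a set set \<Rightarrow> 'a list \<Rightarrow> 'a \<Rightarrow> 'a \<Rightarrow> bool" where
  "is_path V E p u v \<longleftrightarrow> p \<noteq> [] \<and> hd p = u \<and> last p = v \<and> distinct p \<and>
     set p \<subseteq> V \<and> set (walk_edges p) \<subseteq> E"

definition connected_graph :: "'a set \<Rightarrow> 'a set set \<Rightarrow> bool" where
  "connected_graph V E \<longleftrightarrow> V \<noteq> {} \<and> (\<forall>u\<in>V. \<forall>v\<in>V. \<exists>p. is_path V E p u v)"

definition rainbow :: "('a set \<Rightarrow> nat) \<Rightarrow> 'a list \<Rightarrow> bool" where
  "rainbow c p \<longleftrightarrow> distinct (map c (walk_edges p))"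

definition rainbow_connected :: "'a set \<Rightarrow> 'a set set \<Rightarrow> ('a set \<Rightarrow> nat) \<Rightarrow> bool" where
  "rainbow_connected V E c \<longleftrightarrow>
     (\<forall>u\<in>V. \<forall>v\<in>V. \<exists>p. is_path V E p u v \<and> rainbow c p)"

definition rc :: "'a set \<Rightarrow> 'a set set \<Rightarrow> nat" where
  "rc V E = (LEAST k. \<exists>c. c ` E \<subseteq> {..<k} \<and> rainbow_connected V E c)"

definition has_cycle :: "'a set \<Rightarrow> 'a set set \<Rightarrow> bool" where
  "has_cycle V E \<longleftrightarrow> (\<exists>p. length p \<ge> 3 \<and> distinct p \<and> set p \<subseteq> V \<and>
      set (walk_edges p) \<subseteq> E \<and> {last p, hd p} \<in> E)"

definition forest :: "'a set \<Rightarrow> 'a set set \<Rightarrow> bool" where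
  "forest V E \<longleftrightarrow> \<not> has_cycle V E"

definition induced_edges :: "'a set set \<Rightarrow> 'a set \<Rightarrow> 'a set set" where
  "induced_edges E S = {e \<in> E. e \<subseteq> S}"

definition forest_number :: "'a set \<Rightarrow> 'a set set \<Rightarrow> nat" where
  "forest_number V E = Max {card S | S. S \<subseteq> V \<and> forest S (induced_edges E S)}"

end

theory Submission
  imports Defs
begin

text \<open>
  Grow a vertex set H together with an edge colouring that joins any two vertices of H by a
  rainbow path inside H using only the colours below |H|: a vertex attached to H by one edge
  gives that edge the fresh colour |H|. Alongside, keep an induced forest S \<subseteq> H with |H| < 2|S|.
  If some vertex outside H has exactly one neighbour in H, it joins both H and S. Otherwise, if
  some vertex outside H has no neighbour in H, connectivity yields adjacent vertices y, x outside
  H where y has a neighbour in H and x has none; both join H, and x joins S since it has no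
  neighbour in S. When every vertex u outside H has two neighbours a u, b u in H, colour all edges
  {u, a u} with |H| and all edges {u, b u} with |H| + 1: the paths u, a u, ..., b v, v are rainbow,
  so rc(G) \<le> |H| + 2 \<le> 2|S| + 1 \<le> 2 f(G) + 1.
\<close>

lemma walk_edges_Cons: "p \<noteq> [] \<Longrightarrow> walk_edges (x # p) = {x, hd p} # walk_edges p"
  by (cases p) auto

lemma walk_edges_snoc: "p \<noteq> [] \<Longrightarrow> walk_edges (p @ [v]) = walk_edges p @ [{last p, v}]"
  by (induction p rule: walk_edges.induct) auto

lemma walk_edges_rev: "walk_edges (rev p) = rev (walk_edges p)"
proof (induction p rule: walk_edges.induct)
  case (1 x y xs)
  have "walk_edges (rev (x # y # xs)) = walk_edges (rev (y # xs) @ [x])"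
    by simp
  also have "\<dots> = walk_edges (rev (y # xs)) @ [{y, x}]"
    by (simp add: walk_edges_snoc last_rev del: rev.simps)
  also have "\<dots> = rev (walk_edges (x # y # xs))"
    unfolding 1 by (simp add: insert_commute)
  finally show ?case .
qed auto

lemma walk_edges_subset: "e \<in> set (walk_edges p) \<Longrightarrow> e \<subseteq> set p"
  by (induction p rule: walk_edges.induct) auto

lemma walk_edges_crossing:
  assumes "p \<noteq> []" "P (hd p)" "\<not> P (last p)"
  shows "\<exists>y x. {y, x} \<in> set (walk_edges p) \<and> P y \<and> \<not> P x"
  using assms
proof (induction p rule: walk_edges.induct)
  case (1 x y xs)
  show ?case
  proof (cases "P y")
    case True
    then show ?thesis
      using 1 by auto
  next
    case False
    then show ?thesis
      using "1.prems" by (intro exI[of _ x] exI[of _ y]) auto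
  qed
qed auto

definition is_cycle :: "'a set set \<Rightarrow> 'a list \<Rightarrow> bool" where
  "is_cycle F p \<longleftrightarrow> length p \<ge> 3 \<and> distinct p \<and> set (walk_edges p) \<subseteq> F \<and> {last p, hd p} \<in> F"

lemma has_cycle_iff: "has_cycle V E \<longleftrightarrow> (\<exists>p. is_cycle E p \<and> set p \<subseteq> V)"
  unfolding has_cycle_def is_cycle_def by blast

lemma is_cycle_rotate1:
  assumes "is_cycle F p"
  shows "is_cycle F (rotate1 p)"
proof -
  obtain a q where p: "p = a # q"
    using assms unfolding is_cycle_def by (cases p) auto
  moreover have "q \<noteq> []"
    using assms unfolding p is_cycle_def by auto
  ultimately show ?thesis
    using assms unfolding is_cycle_def
    by (auto simp: walk_edges_Cons walk_edges_snoc insert_commute)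
qed

lemma is_cycle_rotate: "is_cycle F p \<Longrightarrow> is_cycle F (rotate n p)"
  by (induction n) (auto intro: is_cycle_rotate1)

lemma is_cycle_two_neighbours:
  assumes "is_cycle F p" "x \<in> set p"
  shows "\<exists>a b. a \<in> set p \<and> b \<in> set p \<and> a \<noteq> b \<and> a \<noteq> x \<and> b \<noteq> x \<and> {x, a} \<in> F \<and> {x, b} \<in> F"
proof -
  obtain i where i: "i < length p" "p ! i = x"
    using assms(2) by (auto simp: in_set_conv_nth)
  define q where "q = rotate i p"
  have q: "is_cycle F q" "set q = set p"
    unfolding q_def using assms(1) is_cycle_rotate by auto
  have "hd q = x"
    unfolding q_def using i by (subst hd_rotate_conv_nth) auto
  then obtain r where r: "q = x # r"
    using q by (cases q) (auto simp: is_cycle_def)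
  then obtain a r' where r': "r = a # r'" "r' \<noteq> []"
    using q(1) unfolding is_cycle_def by (cases r; cases "tl r") auto
  have "{x, a} \<in> F" "{last r', x} \<in> F" "a \<notin> set r'" "x \<notin> set r"
    using q(1) r'(2) unfolding r r'(1) is_cycle_def by (auto simp: walk_edges_Cons)
  moreover have "last r' \<in> set r'"
    using r'(2) by simp
  ultimately show ?thesis
    using q(2) unfolding r r'(1)
    by (intro exI[of _ a] exI[of _ "last r'"]) (auto simp: insert_commute)
qed

lemma forest_insert_vertex:
  assumes "forest S (induced_edges E S)"
    and "\<forall>a\<in>S. \<forall>b\<in>S. {v, a} \<in> E \<longrightarrow> {v, b} \<in> E \<longrightarrow> a = b"
  shows "forest (insert v S) (induced_edges E (insert v S))"
  unfolding forest_def has_cycle_iff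
proof
  assume "\<exists>p. is_cycle (induced_edges E (insert v S)) p \<and> set p \<subseteq> insert v S"
  then obtain p where p: "is_cycle (induced_edges E (insert v S)) p" "set p \<subseteq> insert v S"
    by blast
  show False
  proof (cases "v \<in> set p")
    case True
    then show False
      using is_cycle_two_neighbours[OF p(1) True] p(2) assms(2)
      unfolding induced_edges_def by blast
  next
    case False
    then have "set p \<subseteq> S" and "p \<noteq> []"
      using p unfolding is_cycle_def by auto
    then have "is_cycle (induced_edges E S) p"
      using p(1) walk_edges_subset
      unfolding is_cycle_def induced_edges_def by (auto 4 3)
    then show False
      using \<open>set p \<subseteq> S\<close> assms(1) unfolding forest_def has_cycle_iff by blast
  qed
qed

lemma is_path_rev: "is_path V E (rev p) v u \<longleftrightarrow> is_path V E p u v"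
  unfolding is_path_def by (auto simp: walk_edges_rev hd_rev last_rev)

lemma is_path_singleton: "v \<in> V \<Longrightarrow> is_path V E [v] v v"
  unfolding is_path_def by simp

lemma rainbow_rev: "rainbow c (rev p) \<longleftrightarrow> rainbow c p"
  unfolding rainbow_def by (simp add: walk_edges_rev rev_map[symmetric])

lemma rainbow_singleton: "rainbow c [v]"
  unfolding rainbow_def by simp

lemma rainbow_path_Cons:
  assumes "is_path V E p w y" "rainbow c p" "c ` set (walk_edges p) \<subseteq> K"
    and "v \<in> V" "v \<notin> set p" "{v, w} \<in> E" "c {v, w} \<notin> K"
  shows "is_path V E (v # p) v y \<and> rainbow c (v # p) \<and>
    c ` set (walk_edges (v # p)) \<subseteq> insert (c {v, w}) K"
proof -
  have "p \<noteq> []" "hd p = w"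
    using assms(1) unfolding is_path_def by auto
  then have "walk_edges (v # p) = {v, w} # walk_edges p"
    by (simp add: walk_edges_Cons)
  then show ?thesis
    using assms \<open>p \<noteq> []\<close> unfolding is_path_def rainbow_def by auto
qed

lemma rainbow_path_snoc:
  assumes "is_path V E p x w" "rainbow c p" "c ` set (walk_edges p) \<subseteq> K"
    and "v \<in> V" "v \<notin> set p" "{v, w} \<in> E" "c {v, w} \<notin> K"
  shows "is_path V E (p @ [v]) x v \<and> rainbow c (p @ [v]) \<and>
    c ` set (walk_edges (p @ [v])) \<subseteq> insert (c {v, w}) K"
proof -
  have "is_path V E (v # rev p) v x \<and> rainbow c (v # rev p) \<and>
      c ` set (walk_edges (v # rev p)) \<subseteq> insert (c {v, w}) K"
    by (rule rainbow_path_Cons) (use assms in \<open>auto simp: is_path_rev rainbow_rev walk_edges_rev\<close>)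
  then show ?thesis
    using is_path_rev[of V E "p @ [v]"] rainbow_rev[of c "p @ [v]"] walk_edges_rev[of "p @ [v]"]
    by simp
qed

definition rainbow_core :: "'a set \<Rightarrow> 'a set set \<Rightarrow> 'a set \<Rightarrow> ('a set \<Rightarrow> nat) \<Rightarrow> bool" where
  "rainbow_core V E H c \<longleftrightarrow> finite H \<and> H \<subseteq> V \<and> c ` E \<subseteq> {..<card H} \<and>
     (\<forall>x\<in>H. \<forall>y\<in>H. \<exists>p. is_path V E p x y \<and> set p \<subseteq> H \<and> rainbow c p)"

lemma rainbow_core_singleton: "r \<in> V \<Longrightarrow> rainbow_core V E {r} (\<lambda>_. 0)"
  unfolding rainbow_core_def
  by (auto intro!: exI[of _ "[r]"] simp: is_path_singleton rainbow_singleton)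

lemma rainbow_cong: "(\<And>e. e \<in> set (walk_edges p) \<Longrightarrow> c' e = c e) \<Longrightarrow> rainbow c' p \<longleftrightarrow> rainbow c p"
  unfolding rainbow_def by (metis map_eq_conv)

lemma rainbow_core_path:
  assumes core: "rainbow_core V E H c" and agree: "\<And>e. e \<subseteq> H \<Longrightarrow> c' e = c e"
    and xy: "x \<in> H" "y \<in> H"
  shows "\<exists>p. is_path V E p x y \<and> set p \<subseteq> H \<and> rainbow c' p \<and>
    c' ` set (walk_edges p) \<subseteq> {..<card H}"
proof -
  obtain p where p: "is_path V E p x y" "set p \<subseteq> H" "rainbow c p"
    using core xy unfolding rainbow_core_def by blast
  have agree_p: "c' e = c e" if "e \<in> set (walk_edges p)" for e
    using agree walk_edges_subset[OF that] p(2) by blast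
  then have "rainbow c' p"
    using p(3) rainbow_cong by blast
  moreover have "c' ` set (walk_edges p) \<subseteq> {..<card H}"
    using p(1) agree_p core unfolding is_path_def rainbow_core_def by force
  ultimately show ?thesis
    using p(1,2) by blast
qed

lemma rainbow_core_path_Cons:
  assumes core: "rainbow_core V E H c" and agree: "\<And>e. e \<subseteq> H \<Longrightarrow> c' e = c e"
    and x: "x \<in> V" "x \<notin> H" and s: "s \<in> H" "{x, s} \<in> E" "card H \<le> c' {x, s}" and t: "t \<in> H"
  shows "\<exists>q. is_path V E q x t \<and> set q \<subseteq> insert x H \<and> rainbow c' q \<and>
    c' ` set (walk_edges q) \<subseteq> insert (c' {x, s}) {..<card H}"
proof -
  obtain p where p: "is_path V E p s t" "set p \<subseteq> H" "rainbow c' p"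
      "c' ` set (walk_edges p) \<subseteq> {..<card H}"
    using rainbow_core_path[OF core agree s(1) t] by blast
  have "x \<notin> set p"
    using p(2) x(2) by blast
  then show ?thesis
    using rainbow_path_Cons[OF p(1,3,4) x(1) _ s(2)] s(3) p(2) by (intro exI[of _ "x # p"]) auto
qed

lemma rainbow_core_insert:
  assumes core: "rainbow_core V E H c" and v: "v \<in> V" "v \<notin> H" and w: "w \<in> H" "{v, w} \<in> E"
  shows "rainbow_core V E (insert v H) (c({v, w} := card H))"
proof -
  define c' where "c' = c({v, w} := card H)"
  have H: "finite H" "H \<subseteq> V" "c ` E \<subseteq> {..<card H}"
    using core unfolding rainbow_core_def by auto
  have agree: "c' e = c e" if "e \<subseteq> H" for e
    using that v(2) unfolding c'_def by auto
  have from_v: "\<exists>p. is_path V E p v y \<and> set p \<subseteq> insert v H \<and> rainbow c' p"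
    if "y \<in> insert v H" for y
  proof (cases "y = v")
    case True
    then show ?thesis
      using is_path_singleton[OF v(1)] rainbow_singleton by (intro exI[of _ "[v]"]) auto
  next
    case False
    then have "y \<in> H"
      using that by blast
    moreover have "card H \<le> c' {v, w}"
      unfolding c'_def by simp
    ultimately obtain p where "is_path V E p v y" "set p \<subseteq> insert v H" "rainbow c' p"
      using rainbow_core_path_Cons[OF core agree v w] by meson
    then show ?thesis
      by blast
  qed
  have "\<exists>p. is_path V E p x y \<and> set p \<subseteq> insert v H \<and> rainbow c' p"
    if xy: "x \<in> insert v H" "y \<in> insert v H" for x y
  proof -
    consider "x = v" | "y = v" | "x \<in> H" "y \<in> H"
      using xy by blast
    then show ?thesis
    proof cases
      case 1
      then show ?thesis
        using from_v xy(2) by blast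
    next
      case 2
      then obtain p where "is_path V E p v x" "set p \<subseteq> insert v H" "rainbow c' p"
        using from_v xy(1) by blast
      then show ?thesis
        using 2 by (intro exI[of _ "rev p"]) (auto simp: is_path_rev rainbow_rev)
    next
      case 3
      then obtain p where "is_path V E p x y" "set p \<subseteq> H" "rainbow c' p"
        using rainbow_core_path[OF core agree] by meson
      then show ?thesis
        by (intro exI[of _ p]) auto
    qed
  qed
  moreover have "c' ` E \<subseteq> {..<card (insert v H)}"
    using H v(2) unfolding c'_def by auto
  ultimately show ?thesis
    using H(1,2) v(1) unfolding rainbow_core_def c'_def[symmetric] by blast
qed

definition two_dominating :: "'a set \<Rightarrow> 'a set set \<Rightarrow> 'a set \<Rightarrow> bool" where
  "two_dominating V E H \<longleftrightarrow>
     (\<forall>v\<in>V - H. \<exists>a b. a \<in> H \<and> b \<in> H \<and> a \<noteq> b \<and> {v, a} \<in> E \<and> {v, b} \<in> E)"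

lemma rc_le:
  assumes "c ` E \<subseteq> {..<k}" "rainbow_connected V E c"
  shows "rc V E \<le> k"
  unfolding rc_def by (rule Least_le) (use assms in blast)

lemma two_dominating_recolouring:
  assumes core: "rainbow_core V E H c" and dom: "two_dominating V E H"
  obtains c' where "c' ` E \<subseteq> {..<card H + 2}" "\<And>e. e \<subseteq> H \<Longrightarrow> c' e = c e"
    "\<And>u. u \<in> V - H \<Longrightarrow> \<exists>a\<in>H. {u, a} \<in> E \<and> c' {u, a} = card H"
    "\<And>u. u \<in> V - H \<Longrightarrow> \<exists>b\<in>H. {u, b} \<in> E \<and> c' {u, b} = Suc (card H)"
proof -
  obtain a b where ab: "\<And>u. u \<in> V - H \<Longrightarrow>
      a u \<in> H \<and> b u \<in> H \<and> a u \<noteq> b u \<and> {u, a u} \<in> E \<and> {u, b u} \<in> E"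
    using dom unfolding two_dominating_def by metis
  define c' where "c' e = (if \<exists>u\<in>V - H. e = {u, a u} then card H
      else if \<exists>u\<in>V - H. e = {u, b u} then Suc (card H) else c e)" for e
  show ?thesis
  proof (rule that)
    show "c' ` E \<subseteq> {..<card H + 2}"
    proof
      fix e
      assume "e \<in> c' ` E"
      then obtain e' where "e = c' e'" "c e' < card H"
        using core unfolding rainbow_core_def by blast
      then show "e \<in> {..<card H + 2}"
        unfolding c'_def by simp
    qed
  next
    show "c' e = c e" if "e \<subseteq> H" for e
      using that unfolding c'_def by auto
  next
    show "\<exists>a'\<in>H. {u, a'} \<in> E \<and> c' {u, a'} = card H" if "u \<in> V - H" for u
      using ab[OF that] that unfolding c'_def by auto
  next
    show "\<exists>b'\<in>H. {u, b'} \<in> E \<and> c' {u, b'} = Suc (card H)" if u: "u \<in> V - H" for u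
    proof -
      have "{u, b u} \<noteq> {u', a u'}" if u': "u' \<in> V - H" for u'
        using ab[OF u] ab[OF u'] u u' by (auto simp: doubleton_eq_iff)
      then have "c' {u, b u} = Suc (card H)"
        using u unfolding c'_def by auto
      then show ?thesis
        using ab[OF u] by blast
    qed
  qed
qed

lemma rc_le_two_dominating_core:
  assumes core: "rainbow_core V E H c" and dom: "two_dominating V E H"
  shows "rc V E \<le> card H + 2"
proof -
  obtain c' where range: "c' ` E \<subseteq> {..<card H + 2}" and agree: "\<And>e. e \<subseteq> H \<Longrightarrow> c' e = c e"
    and enter: "\<And>u. u \<in> V - H \<Longrightarrow> \<exists>a\<in>H. {u, a} \<in> E \<and> c' {u, a} = card H"
    and leave: "\<And>u. u \<in> V - H \<Longrightarrow> \<exists>b\<in>H. {u, b} \<in> E \<and> c' {u, b} = Suc (card H)"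
    using two_dominating_recolouring[OF core dom] by blast
  have into_core: "\<exists>q. is_path V E q x t \<and> set q \<subseteq> insert x H \<and> rainbow c' q \<and>
      c' ` set (walk_edges q) \<subseteq> {..<Suc (card H)}" if x: "x \<in> V" and t: "t \<in> H" for x t
  proof (cases "x \<in> H")
    case True
    then show ?thesis
      using rainbow_core_path[OF core agree True t] by fastforce
  next
    case False
    then obtain s where s: "s \<in> H" "{x, s} \<in> E" "c' {x, s} = card H"
      using enter x by blast
    then show ?thesis
      using rainbow_core_path_Cons[OF core agree x False s(1,2) _ t] by (simp add: lessThan_Suc)
  qed
  have "\<exists>p. is_path V E p x y \<and> rainbow c' p" if xy: "x \<in> V" "y \<in> V" for x y
  proof (cases "y \<in> H")
    case True
    then show ?thesis
      using into_core[OF xy(1)] by blast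
  next
    case False
    then obtain t where t: "t \<in> H" "{y, t} \<in> E" "c' {y, t} = Suc (card H)"
      using leave xy(2) by blast
    then obtain q where q: "is_path V E q x t" "set q \<subseteq> insert x H" "rainbow c' q"
        "c' ` set (walk_edges q) \<subseteq> {..<Suc (card H)}"
      using into_core[OF xy(1)] by blast
    show ?thesis
    proof (cases "x = y")
      case True
      then show ?thesis
        using xy is_path_singleton rainbow_singleton by metis
    next
      case False
      then have "y \<notin> set q"
        using q(2) \<open>y \<notin> H\<close> by blast
      then show ?thesis
        using rainbow_path_snoc[OF q(1,3,4) xy(2) _ t(2)] t(3) by auto
    qed
  qed
  then have "rainbow_connected V E c'"
    unfolding rainbow_connected_def by blast
  then show ?thesis
    using rc_le[OF range] by blast
qed

definition forest_bounded_core ::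
    "'a set \<Rightarrow> 'a set set \<Rightarrow> 'a set \<Rightarrow> ('a set \<Rightarrow> nat) \<Rightarrow> 'a set \<Rightarrow> bool" where
  "forest_bounded_core V E H c S \<longleftrightarrow> rainbow_core V E H c \<and> S \<subseteq> H \<and>
     forest S (induced_edges E S) \<and> card H + 1 \<le> 2 * card S"

lemma forest_bounded_core_singleton:
  assumes "r \<in> V"
  shows "forest_bounded_core V E {r} (\<lambda>_. 0) {r}"
proof -
  have "forest {} (induced_edges E {})"
    unfolding forest_def has_cycle_def by auto
  then have "forest {r} (induced_edges E {r})"
    using forest_insert_vertex[of "{}" E r] by simp
  then show ?thesis
    using rainbow_core_singleton[OF assms] unfolding forest_bounded_core_def by simp
qed

lemma forest_bounded_core_insert_pendant:
  assumes core: "forest_bounded_core V E H c S" and v: "v \<in> V" "v \<notin> H"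
    and w: "w \<in> H" "{v, w} \<in> E" and unique: "\<forall>a\<in>H. {v, a} \<in> E \<longrightarrow> a = w"
  shows "\<exists>c'. forest_bounded_core V E (insert v H) c' (insert v S)"
proof -
  have H: "rainbow_core V E H c" "finite H" "S \<subseteq> H" "forest S (induced_edges E S)"
      "card H + 1 \<le> 2 * card S"
    using core unfolding forest_bounded_core_def rainbow_core_def by auto
  have "forest (insert v S) (induced_edges E (insert v S))"
    using forest_insert_vertex[OF H(4)] unique H(3) by blast
  moreover have "v \<notin> S"
    using H(3) v(2) by blast
  then have "card (insert v H) + 1 \<le> 2 * card (insert v S)"
    using H(2,5) v(2) finite_subset[OF H(3,2)] by simp
  ultimately show ?thesis
    using rainbow_core_insert[OF H(1) v w] H(3) unfolding forest_bounded_core_def by blast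
qed

lemma forest_bounded_core_insert_edge:
  assumes core: "forest_bounded_core V E H c S" and y: "y \<in> V" "y \<notin> H"
    and w: "w \<in> H" "{y, w} \<in> E" and x: "x \<in> V" "x \<notin> H" "x \<noteq> y" "{x, y} \<in> E"
    and isolated: "\<forall>a\<in>H. {x, a} \<notin> E"
  shows "\<exists>c'. forest_bounded_core V E (insert x (insert y H)) c' (insert x S)"
proof -
  have H: "rainbow_core V E H c" "finite H" "S \<subseteq> H" "forest S (induced_edges E S)"
      "card H + 1 \<le> 2 * card S"
    using core unfolding forest_bounded_core_def rainbow_core_def by auto
  obtain c' where "rainbow_core V E (insert y H) c'"
    using rainbow_core_insert[OF H(1) y w] by blast
  then obtain c'' where "rainbow_core V E (insert x (insert y H)) c''"
    using rainbow_core_insert[OF _ x(1) _ _ x(4)] x(2,3) by blast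
  moreover have "forest (insert x S) (induced_edges E (insert x S))"
    using forest_insert_vertex[OF H(4)] isolated H(3) by blast
  moreover have "x \<notin> S"
    using H(3) x(2) by blast
  then have "card (insert x (insert y H)) + 1 \<le> 2 * card (insert x S)"
    using H(2,5) x(2,3) y(2) finite_subset[OF H(3,2)] by simp
  ultimately show ?thesis
    using H(3) unfolding forest_bounded_core_def by blast
qed

lemma connected_distance_two_vertex:
  assumes conn: "connected_graph V E" and h: "h \<in> H" "h \<in> V"
    and v: "v \<in> V" "v \<notin> H" "\<forall>w\<in>H. {v, w} \<notin> E"
  obtains x y w where "x \<in> V" "y \<in> V" "x \<notin> H" "y \<notin> H" "x \<noteq> y" "w \<in> H"
    "{x, y} \<in> E" "{y, w} \<in> E" "\<forall>a\<in>H. {x, a} \<notin> E"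
proof -
  obtain p where p: "is_path V E p h v"
    using conn h(2) v(1) unfolding connected_graph_def by blast
  define near where "near z \<longleftrightarrow> z \<in> H \<or> (\<exists>w\<in>H. {z, w} \<in> E)" for z
  have "p \<noteq> []" "near (hd p)" "\<not> near (last p)"
    using p h(1) v(2,3) unfolding is_path_def near_def by (auto simp: insert_commute)
  then obtain y x where yx: "{y, x} \<in> set (walk_edges p)" "near y" "\<not> near x"
    using walk_edges_crossing[of p near] by blast
  then have edge: "{x, y} \<in> E" "x \<in> V" "y \<in> V"
    using p walk_edges_subset[OF yx(1)] unfolding is_path_def by (auto simp: insert_commute)
  have x: "x \<notin> H" "\<forall>a\<in>H. {x, a} \<notin> E" "x \<noteq> y"
    using yx(2,3) unfolding near_def by auto
  then have "y \<notin> H"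
    using edge(1) by blast
  then obtain w where "w \<in> H" "{y, w} \<in> E"
    using yx(2) unfolding near_def by blast
  then show ?thesis
    using that edge x \<open>y \<notin> H\<close> by blast
qed

lemma forest_bounded_core_grow:
  assumes conn: "connected_graph V E" and core: "forest_bounded_core V E H c S"
    and not_dom: "\<not> two_dominating V E H"
  shows "\<exists>H' c' S'. forest_bounded_core V E H' c' S' \<and> H \<subset> H'"
proof -
  obtain v where v: "v \<in> V" "v \<notin> H"
    and few: "\<not> (\<exists>a b. a \<in> H \<and> b \<in> H \<and> a \<noteq> b \<and> {v, a} \<in> E \<and> {v, b} \<in> E)"
    using not_dom unfolding two_dominating_def by blast
  show ?thesis
  proof (cases "\<exists>w\<in>H. {v, w} \<in> E")
    case True
    then obtain w where w: "w \<in> H" "{v, w} \<in> E"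
      by blast
    then have "\<forall>a\<in>H. {v, a} \<in> E \<longrightarrow> a = w"
      using few by blast
    then show ?thesis
      using forest_bounded_core_insert_pendant[OF core v w] v(2) by blast
  next
    case False
    have "H \<subseteq> V" "S \<subseteq> H" "card H + 1 \<le> 2 * card S"
      using core unfolding forest_bounded_core_def rainbow_core_def by auto
    moreover have "S \<noteq> {}"
      using \<open>card H + 1 \<le> 2 * card S\<close> by auto
    ultimately obtain h where h: "h \<in> H" "h \<in> V"
      by blast
    have "\<forall>w\<in>H. {v, w} \<notin> E"
      using False by blast
    then obtain x y w where xyw: "x \<in> V" "y \<in> V" "x \<notin> H" "y \<notin> H" "x \<noteq> y" "w \<in> H"
        "{x, y} \<in> E" "{y, w} \<in> E" "\<forall>a\<in>H. {x, a} \<notin> E"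
      by (rule connected_distance_two_vertex[OF conn h v])
    then obtain c' where "forest_bounded_core V E (insert x (insert y H)) c' (insert x S)"
      using forest_bounded_core_insert_edge[OF core xyw(2,4,6,8,1,3,5,7,9)] by blast
    moreover have "H \<subset> insert x (insert y H)"
      using xyw(3) by blast
    ultimately show ?thesis
      by blast
  qed
qed

lemma forest_bounded_core_extend_two_dominating:
  assumes "finite V" "connected_graph V E" "forest_bounded_core V E H c S"
  shows "\<exists>H' c' S'. forest_bounded_core V E H' c' S' \<and> two_dominating V E H'"
  using assms(3)
proof (induction "card (V - H)" arbitrary: H c S rule: less_induct)
  case less
  show ?case
  proof (cases "two_dominating V E H")
    case True
    then show ?thesis
      using less.prems by blast
  next
    case False
    then obtain H' c' S' where H': "forest_bounded_core V E H' c' S'" "H \<subset> H'"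
      using forest_bounded_core_grow[OF assms(2) less.prems] by blast
    then have "H' \<subseteq> V"
      unfolding forest_bounded_core_def rainbow_core_def by blast
    then have "card (V - H') < card (V - H)"
      using H'(2) assms(1) by (intro psubset_card_mono) auto
    then show ?thesis
      using less.hyps H'(1) by blast
  qed
qed

lemma forest_number_ge:
  assumes "finite V" "S \<subseteq> V" "forest S (induced_edges E S)"
  shows "card S \<le> forest_number V E"
proof -
  have "{card S | S. S \<subseteq> V \<and> forest S (induced_edges E S)} \<subseteq> card ` Pow V"
    by auto
  then have "finite {card S | S. S \<subseteq> V \<and> forest S (induced_edges E S)}"
    using assms(1) finite_subset by blast
  then show ?thesis
    unfolding forest_number_def using assms(2,3) by (intro Max_ge) auto
qed

theorem theorem3:
  fixes V :: "'a set" and E :: "'a set set"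
  assumes "simple_graph V E" and "connected_graph V E"
  shows "rc V E \<le> 2 * forest_number V E + 2"
proof -
  have fin: "finite V"
    using assms(1) unfolding simple_graph_def by blast
  obtain r where "r \<in> V"
    using assms(2) unfolding connected_graph_def by blast
  then obtain H c S where core: "forest_bounded_core V E H c S" and dom: "two_dominating V E H"
    using forest_bounded_core_extend_two_dominating[OF fin assms(2) forest_bounded_core_singleton] by blast
  then have H: "rainbow_core V E H c" "S \<subseteq> V" "forest S (induced_edges E S)"
      "card H + 1 \<le> 2 * card S"
    unfolding forest_bounded_core_def rainbow_core_def by auto
  have "rc V E \<le> card H + 2"
    using rc_le_two_dominating_core[OF H(1) dom] .
  moreover have "card S \<le> forest_number V E"
    using forest_number_ge[OF fin H(2,3)] .
  ultimately show ?thesis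
    using H(4) by linarith
qed

end
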